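(* Let $k \ge 2$ and $d \ge 1$ be integers and let $\varepsilon < 1/(k-1)$, $\delta := (k-1)\varepsilon/2$. Let $A$ and $B$ be random variables such that $A$ is uniformly distributed over $[2k]$ and, for each $a \in [2k]$, conditioned on $A=a$, $B$ is distributed according to a probability distribution $P_a$ on $[d]$ (viewed as a vector in $\mathbb{R}^d$). Assume that for all $r \in [k-1]$, $$\frac{1}{2k} \left\| \sum_{a=1}^r (P_a + P_{a+k}) - \sum_{a=r+1}^k (P_a + P_{a+k}) \right\|_1 \ge 1-\varepsilon.$$ Then $I(A:B) \ge \log k - \delta \log (k-1) - H(\delta)$.
   Context: $[m]$ denotes $\{1,\ldots,m\}$. All logarithms are base $2$. $H(\delta) := -\delta \log \delta - (1-\delta)\log(1-\delta)$ is the binary entropy function (with $0\log 0 = 0$). $I(A:B) = H(A)+H(B)-H(A,B)$ is the mutual information, where $H$ of a random variable denotes its Shannon entropy (base $2$). $\|\cdot\|_1$ is the $\ell_1$ norm on $\mathbb{R}^d$. *)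

theory Defs
  imports Complex_Main
begin

text \<open>Shannon entropy (base 2) of a finite distribution p on a finite set S,
  with the convention 0 log 0 = 0 (automatic, since 0 * x = 0).\<close>
definition shannon_entropy :: "'a set \<Rightarrow> ('a \<Rightarrow> real) \<Rightarrow> real" where
  "shannon_entropy S p = - (\<Sum>x\<in>S. p x * log 2 (p x))"

definition bin_entropy :: "real \<Rightarrow> real" where
  "bin_entropy \<delta> = - \<delta> * log 2 \<delta> - (1 - \<delta>) * log 2 (1 - \<delta>)"

definition joint_AB :: "nat \<Rightarrow> (nat \<Rightarrow> nat \<Rightarrow> real) \<Rightarrow> nat \<times> nat \<Rightarrow> real" where
  "joint_AB k P = (\<lambda>(a, b). P a b / real (2 * k))"

definition law_A :: "nat \<Rightarrow> nat \<Rightarrow> real" where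
  "law_A k = (\<lambda>a. 1 / real (2 * k))"

definition law_B :: "nat \<Rightarrow> (nat \<Rightarrow> nat \<Rightarrow> real) \<Rightarrow> nat \<Rightarrow> real" where
  "law_B k P = (\<lambda>b. \<Sum>a\<in>{1..2*k}. P a b / real (2 * k))"

definition mutual_info_AB :: "nat \<Rightarrow> nat \<Rightarrow> (nat \<Rightarrow> nat \<Rightarrow> real) \<Rightarrow> real" where
  "mutual_info_AB k d P =
     shannon_entropy {1..2*k} (law_A k) + shannon_entropy {1..d} (law_B k P)
     - shannon_entropy ({1..2*k} \<times> {1..d}) (joint_AB k P)"

end

theory Submission
  imports Defs
begin

text \<open>Merge the values a and a + k of A into a class c \<in> [k]. For each output b, take the first
  cut point g(b) at which the prefix of the class weights P_c(b) + P_{c+k}(b) outweighs the suffix;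
  the mass outside the class g(b) is then at most the sum, over all cuts r \<in> [k-1], of the lighter
  side of the cut. By the separation hypothesis each cut contributes at most k\<epsilon> after summing over b,
  so guessing the class of A as g(B) errs with probability at most \<delta>. Fano's inequality, proved by
  comparing the conditional law of A given B with the law that puts mass (1-\<delta>)/2 on both members of
  the guessed class and \<delta>/(2(k-1)) on every other value, turns this into the bound on I(A:B).\<close>

lemma gibbs_inequality_term:
  fixes p q :: real
  assumes "p \<ge> 0" "q \<ge> 0" "p > 0 \<Longrightarrow> q > 0"
  shows "p * log 2 q - p * log 2 p \<le> (q - p) / ln 2"
proof (cases "p = 0")
  case True
  then show ?thesis using assms by simp
next
  case False
  then have p: "p > 0" and q: "q > 0" using assms by auto
  have "log 2 q - log 2 p = ln (q / p) / ln 2"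
    using p q by (simp add: log_def ln_div diff_divide_distrib)
  also have "\<dots> \<le> (q / p - 1) / ln 2"
    using ln_le_minus_one[of "q / p"] p q by (intro divide_right_mono) auto
  finally have "p * (log 2 q - log 2 p) \<le> p * ((q / p - 1) / ln 2)"
    using p by (intro mult_left_mono) auto
  also have "\<dots> = (q - p) / ln 2" using p by (simp add: field_simps)
  finally show ?thesis by (simp add: right_diff_distrib)
qed

lemma gibbs_inequality:
  fixes p q :: "'a \<Rightarrow> real"
  assumes "finite S" "\<And>x. x \<in> S \<Longrightarrow> p x \<ge> 0" "\<And>x. x \<in> S \<Longrightarrow> q x \<ge> 0"
    "\<And>x. x \<in> S \<Longrightarrow> p x > 0 \<Longrightarrow> q x > 0" "sum p S = 1" "sum q S \<le> 1"
  shows "(\<Sum>x\<in>S. p x * log 2 (q x)) \<le> (\<Sum>x\<in>S. p x * log 2 (p x))"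
proof -
  have "(\<Sum>x\<in>S. p x * log 2 (q x)) - (\<Sum>x\<in>S. p x * log 2 (p x))
      = (\<Sum>x\<in>S. p x * log 2 (q x) - p x * log 2 (p x))"
    by (simp add: sum_subtractf)
  also have "\<dots> \<le> (\<Sum>x\<in>S. (q x - p x) / ln 2)"
    by (intro sum_mono gibbs_inequality_term) (use assms in auto)
  also have "\<dots> = (sum q S - sum p S) / ln 2"
    by (simp add: sum_divide_distrib[symmetric] sum_subtractf)
  also have "\<dots> \<le> 0" using assms by (intro divide_nonpos_pos) auto
  finally show ?thesis by simp
qed

lemma sum_product_swap: "(\<Sum>x\<in>A \<times> B. f x) = (\<Sum>b\<in>B. \<Sum>a\<in>A. f (a, b))"
  unfolding sum.cartesian_product' by (rule sum.swap)

lemma conditional_gibbs_inequality: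
  fixes p r :: "'a \<times> 'b \<Rightarrow> real"
  assumes fin: "finite S" "finite D"
    and p_nonneg: "\<And>x. x \<in> S \<times> D \<Longrightarrow> p x \<ge> 0" and p_sum: "sum p (S \<times> D) = 1"
    and r_nonneg: "\<And>x. x \<in> S \<times> D \<Longrightarrow> r x \<ge> 0"
    and r_sum: "\<And>b. b \<in> D \<Longrightarrow> (\<Sum>a\<in>S. r (a, b)) = 1"
    and r_pos: "\<And>x. x \<in> S \<times> D \<Longrightarrow> p x > 0 \<Longrightarrow> r x > 0"
  defines "pB \<equiv> \<lambda>b. \<Sum>a\<in>S. p (a, b)"
  shows "(\<Sum>b\<in>D. pB b * log 2 (pB b)) + (\<Sum>x\<in>S \<times> D. p x * log 2 (r x))
           \<le> (\<Sum>x\<in>S \<times> D. p x * log 2 (p x))"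
proof -
  define q where "q x = pB (snd x) * r x" for x
  have pB_ge: "pB (snd x) \<ge> p x" if x_in: "x \<in> S \<times> D" for x
  proof -
    obtain a b where x: "x = (a, b)" "a \<in> S" "b \<in> D" using x_in by auto
    have "p (a, b) \<le> (\<Sum>a'\<in>S. p (a', b))"
      using x fin p_nonneg by (intro member_le_sum) auto
    then show ?thesis unfolding pB_def x by simp
  qed
  have q_pos: "q x > 0" if "x \<in> S \<times> D" "p x > 0" for x
    using pB_ge[of x] r_pos[of x] that unfolding q_def by auto
  have q_nonneg: "q x \<ge> 0" if "x \<in> S \<times> D" for x
    using pB_ge[OF that] p_nonneg[OF that] r_nonneg[OF that] unfolding q_def by simp
  have "sum q (S \<times> D) = (\<Sum>b\<in>D. pB b * (\<Sum>a\<in>S. r (a, b)))"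
    unfolding sum_product_swap q_def by (simp add: sum_distrib_left)
  also have "\<dots> = sum p (S \<times> D)"
    using r_sum unfolding sum_product_swap pB_def by simp
  finally have q_sum: "sum q (S \<times> D) = 1" using p_sum by simp
  have "p x * log 2 (q x) = p x * log 2 (pB (snd x)) + p x * log 2 (r x)"
    if x: "x \<in> S \<times> D" for x
  proof (cases "p x > 0")
    case True
    then show ?thesis
      using pB_ge[OF x] r_pos[OF x] unfolding q_def by (simp add: log_mult distrib_left)
  next
    case False
    then show ?thesis using p_nonneg[OF x] by simp
  qed
  then have "(\<Sum>x\<in>S \<times> D. p x * log 2 (q x))
      = (\<Sum>b\<in>D. pB b * log 2 (pB b)) + (\<Sum>x\<in>S \<times> D. p x * log 2 (r x))"
    by (simp add: sum.distrib sum_product_swap pB_def sum_distrib_right)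
  moreover have "(\<Sum>x\<in>S \<times> D. p x * log 2 (q x)) \<le> (\<Sum>x\<in>S \<times> D. p x * log 2 (p x))"
    using fin p_nonneg q_nonneg q_pos p_sum q_sum by (intro gibbs_inequality) auto
  ultimately show ?thesis by simp
qed

lemma sum_double_interval_pairs:
  fixes f :: "nat \<Rightarrow> 'a::comm_monoid_add"
  shows "(\<Sum>a\<in>{1..2*k}. f a) = (\<Sum>c\<in>{1..k}. f c + f (c + k))"
proof -
  have "(\<Sum>a\<in>{1..2*k}. f a) = (\<Sum>a\<in>{1..k}. f a) + (\<Sum>a\<in>{k+1..k+k}. f a)"
    using sum.ub_add_nat[of 1 k f k] by (simp add: mult_2)
  also have "(\<Sum>a\<in>{k+1..k+k}. f a) = (\<Sum>a\<in>{1..k}. f (a + k))"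
    using sum.shift_bounds_cl_nat_ivl[of f 1 k k] by (simp add: add.commute)
  finally show ?thesis by (simp add: sum.distrib)
qed

definition pair_class :: "nat \<Rightarrow> nat \<Rightarrow> nat" where
  "pair_class k a = (if a \<le> k then a else a - k)"

lemma sum_pair_class_ne:
  fixes f :: "nat \<Rightarrow> 'a::ab_group_add"
  assumes "c \<in> {1..k}"
  shows "(\<Sum>a\<in>{1..2*k}. if pair_class k a = c then 0 else f a)
           = (\<Sum>a\<in>{1..2*k}. f a) - (f c + f (c + k))"
proof -
  have "(\<Sum>a\<in>{1..2*k}. if pair_class k a = c then 0 else f a)
      = (\<Sum>c'\<in>{1..k}. (f c' + f (c' + k)) - (if c' = c then f c' + f (c' + k) else 0))"
    unfolding sum_double_interval_pairs by (intro sum.cong) (auto simp: pair_class_def)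
  also have "\<dots> = (\<Sum>a\<in>{1..2*k}. f a) - (f c + f (c + k))"
    using assms sum_double_interval_pairs[of f k] by (simp add: sum_subtractf)
  finally show ?thesis .
qed

text \<open>For c the first cut point where the prefix weight overtakes the suffix weight, the cuts
  c - 1 and c alone already contribute the total weight minus w c.\<close>
lemma exists_index_total_minus_le_sum_min_prefix_suffix:
  fixes w :: "nat \<Rightarrow> real"
  assumes "k \<ge> 1" and w_nonneg: "\<And>i. i \<in> {1..k} \<Longrightarrow> w i \<ge> 0"
  shows "\<exists>c\<in>{1..k}. (\<Sum>i\<in>{1..k}. w i) - w c
           \<le> (\<Sum>r\<in>{1..k-1}. min (\<Sum>i\<in>{1..r}. w i) (\<Sum>i\<in>{r+1..k}. w i))"
proof -
  define L where "L r = (\<Sum>i\<in>{1..r}. w i)" for r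
  define R where "R r = (\<Sum>i\<in>{r+1..k}. w i)" for r
  define h where "h r = min (L r) (R r)" for r
  have L_nonneg: "L r \<ge> 0" if "r \<le> k" for r
    unfolding L_def using that w_nonneg by (intro sum_nonneg) auto
  have R_nonneg: "R r \<ge> 0" for r
    unfolding R_def using w_nonneg by (intro sum_nonneg) auto
  have L_mono: "L r \<le> L s" if "r \<le> s" "s \<le> k" for r s
    unfolding L_def using that w_nonneg by (intro sum_mono2) auto
  have R_antimono: "R s \<le> R r" if "r \<le> s" for r s
    unfolding R_def using that w_nonneg by (intro sum_mono2) auto
  have L_add_R: "L r + R r = L k" if "r \<le> k" for r
    unfolding L_def R_def using that sum.ub_add_nat[of 1 r w "k - r"] by simp
  have h_nonneg: "h r \<ge> 0" if "r \<le> k" for r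
    unfolding h_def using L_nonneg[OF that] R_nonneg by simp
  have "{0..k} = insert 0 (insert k {1..k-1})" using assms by auto
  moreover have "h 0 = 0" "h k = 0"
    unfolding h_def using R_nonneg[of 0] L_nonneg[of k] by (auto simp: L_def R_def)
  ultimately have sum_h: "(\<Sum>r\<in>{0..k}. h r) = (\<Sum>r\<in>{1..k-1}. h r)"
    using assms by simp
  define m where "m = (LEAST r. r \<ge> 1 \<and> L r \<ge> R r)"
  have k_witness: "k \<ge> 1 \<and> L k \<ge> R k" using assms L_nonneg[of k] by (simp add: R_def)
  have m: "m \<ge> 1 \<and> L m \<ge> R m"
    unfolding m_def by (rule LeastI[of _ k]) (use k_witness in auto)
  have m_le: "m \<le> k"
    unfolding m_def by (rule Least_le) (use k_witness in auto)
  have h_m: "h m = R m"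
    unfolding h_def using m by simp
  have h_pred_m: "h (m - 1) = L (m - 1)"
  proof (cases "m = 1")
    case True
    then show ?thesis unfolding h_def using R_nonneg[of 0] by (simp add: L_def)
  next
    case False
    then have "\<not> (m - 1 \<ge> 1 \<and> L (m - 1) \<ge> R (m - 1))"
      using not_less_Least[of "m - 1" "\<lambda>r. 1 \<le> r \<and> R r \<le> L r", folded m_def] m by simp
    then have "L (m - 1) < R (m - 1)" using False m by auto
    then show ?thesis unfolding h_def by simp
  qed
  have "L k - w m = L (m - 1) + R m"
  proof -
    have "L m = L (m - 1) + w m" using m unfolding L_def by (cases m) auto
    then show ?thesis using L_add_R[OF m_le] by simp
  qed
  also have "\<dots> = (\<Sum>r\<in>{m - 1, m}. h r)" using m h_m h_pred_m by (cases m) auto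
  also have "\<dots> \<le> (\<Sum>r\<in>{0..k}. h r)"
    using m_le h_nonneg by (intro sum_mono2) auto
  finally have "L k - w m \<le> (\<Sum>r\<in>{1..k-1}. h r)" using sum_h by simp
  then show ?thesis
    using m m_le unfolding h_def L_def R_def by auto
qed

lemma joint_AB_apply: "joint_AB k P (a, b) = P a b / (2 * real k)"
  by (simp add: joint_AB_def)

lemma joint_AB_nonneg:
  assumes "\<And>a b. a \<in> {1..2*k} \<Longrightarrow> b \<in> {1..d} \<Longrightarrow> P a b \<ge> 0"
    and "x \<in> {1..2*k} \<times> {1..d}"
  shows "joint_AB k P x \<ge> 0"
  using assms by (auto simp: joint_AB_apply)

lemma sum_joint_AB:
  assumes "k \<ge> 1" "\<And>a. a \<in> {1..2*k} \<Longrightarrow> (\<Sum>b\<in>{1..d}. P a b) = 1"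
  shows "(\<Sum>x\<in>{1..2*k} \<times> {1..d}. joint_AB k P x) = 1"
proof -
  have "(\<Sum>x\<in>{1..2*k} \<times> {1..d}. joint_AB k P x)
      = (\<Sum>a\<in>{1..2*k}. (\<Sum>b\<in>{1..d}. P a b) / (2 * real k))"
    by (simp add: sum.cartesian_product' joint_AB_apply sum_divide_distrib)
  also have "\<dots> = 1" using assms by simp
  finally show ?thesis .
qed

lemma law_B_eq_sum_joint_AB: "law_B k P b = (\<Sum>a\<in>{1..2*k}. joint_AB k P (a, b))"
  by (simp add: law_B_def joint_AB_apply)

lemma shannon_entropy_law_A:
  assumes "k \<ge> 1"
  shows "shannon_entropy {1..2*k} (law_A k) = log 2 (2 * real k)"
  using assms by (simp add: shannon_entropy_def law_A_def log_divide)

definition decoding_error :: "nat \<Rightarrow> nat \<Rightarrow> (nat \<Rightarrow> nat \<Rightarrow> real) \<Rightarrow> (nat \<Rightarrow> nat) \<Rightarrow> real" where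
  "decoding_error k d P g =
     (\<Sum>x\<in>{1..2*k} \<times> {1..d}. if pair_class k (fst x) = g (snd x) then 0 else joint_AB k P x)"

lemma decoding_error_eq:
  assumes "\<And>b. b \<in> {1..d} \<Longrightarrow> g b \<in> {1..k}"
  shows "decoding_error k d P g =
           (\<Sum>b\<in>{1..d}. (\<Sum>a\<in>{1..2*k}. P a b) - (P (g b) b + P (g b + k) b)) / (2 * real k)"
proof -
  have "decoding_error k d P g =
      (\<Sum>b\<in>{1..d}. \<Sum>a\<in>{1..2*k}. if pair_class k a = g b then 0 else P a b) / (2 * real k)"
    unfolding decoding_error_def sum_product_swap sum_divide_distrib
    by (intro sum.cong refl) (auto simp: joint_AB_apply)
  moreover have "(\<Sum>a\<in>{1..2*k}. if pair_class k a = g b then 0 else P a b)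
      = (\<Sum>a\<in>{1..2*k}. P a b) - (P (g b) b + P (g b + k) b)" if "b \<in> {1..d}" for b
    using assms[OF that] by (rule sum_pair_class_ne)
  ultimately show ?thesis by simp
qed

lemma sum_min_prefix_suffix_le:
  fixes \<epsilon> :: real
  assumes "k \<ge> 1" "r \<le> k"
    and Psum: "\<And>a. a \<in> {1..2*k} \<Longrightarrow> (\<Sum>b\<in>{1..d}. P a b) = 1"
    and sep: "1 / real (2 * k) *
          (\<Sum>b\<in>{1..d}. \<bar>(\<Sum>a\<in>{1..r}. P a b + P (a + k) b)
                         - (\<Sum>a\<in>{r+1..k}. P a b + P (a + k) b)\<bar>) \<ge> 1 - \<epsilon>"
  shows "(\<Sum>b\<in>{1..d}. min (\<Sum>a\<in>{1..r}. P a b + P (a + k) b)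
                          (\<Sum>a\<in>{r+1..k}. P a b + P (a + k) b)) \<le> real k * \<epsilon>"
proof -
  define L where "L b = (\<Sum>a\<in>{1..r}. P a b + P (a + k) b)" for b
  define R where "R b = (\<Sum>a\<in>{r+1..k}. P a b + P (a + k) b)" for b
  have "L b + R b = (\<Sum>a\<in>{1..2*k}. P a b)" for b
    unfolding L_def R_def sum_double_interval_pairs
    using assms(2) sum.ub_add_nat[of 1 r "\<lambda>a. P a b + P (a + k) b" "k - r"] by simp
  then have "(\<Sum>b\<in>{1..d}. L b + R b) = (\<Sum>b\<in>{1..d}. \<Sum>a\<in>{1..2*k}. P a b)"
    by simp
  also have "\<dots> = (\<Sum>a\<in>{1..2*k}. \<Sum>b\<in>{1..d}. P a b)" by (rule sum.swap)
  also have "\<dots> = 2 * real k" using Psum by simp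
  finally have "(\<Sum>b\<in>{1..d}. L b + R b) = 2 * real k" .
  moreover have "\<bar>L b - R b\<bar> = L b + R b - 2 * min (L b) (R b)" for b
    by (auto simp: min_def)
  ultimately have "(\<Sum>b\<in>{1..d}. \<bar>L b - R b\<bar>) = 2 * real k - 2 * (\<Sum>b\<in>{1..d}. min (L b) (R b))"
    by (simp add: sum_subtractf sum_distrib_left)
  with sep have "1 - \<epsilon> \<le> (2 * real k - 2 * (\<Sum>b\<in>{1..d}. min (L b) (R b))) / (2 * real k)"
    unfolding L_def R_def by simp
  moreover have "real k > 0" using assms(1) by simp
  ultimately show ?thesis unfolding L_def R_def by (simp add: field_simps)
qed

lemma decoding_error_nonneg:
  assumes "\<And>a b. a \<in> {1..2*k} \<Longrightarrow> b \<in> {1..d} \<Longrightarrow> P a b \<ge> 0"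
  shows "decoding_error k d P g \<ge> 0"
  unfolding decoding_error_def using joint_AB_nonneg[of k d P, OF assms] by (intro sum_nonneg) auto

lemma exists_decoder_with_small_error:
  fixes \<epsilon> :: real
  assumes "k \<ge> 1"
    and Pnn: "\<And>a b. a \<in> {1..2*k} \<Longrightarrow> b \<in> {1..d} \<Longrightarrow> P a b \<ge> 0"
    and Psum: "\<And>a. a \<in> {1..2*k} \<Longrightarrow> (\<Sum>b\<in>{1..d}. P a b) = 1"
    and sep: "\<And>r. r \<in> {1..k-1} \<Longrightarrow>
        1 / real (2 * k) *
          (\<Sum>b\<in>{1..d}. \<bar>(\<Sum>a\<in>{1..r}. P a b + P (a + k) b)
                         - (\<Sum>a\<in>{r+1..k}. P a b + P (a + k) b)\<bar>) \<ge> 1 - \<epsilon>"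
  shows "\<exists>g. (\<forall>b\<in>{1..d}. g b \<in> {1..k}) \<and> decoding_error k d P g \<le> (real k - 1) * \<epsilon> / 2"
proof -
  define w where "w b c = P c b + P (c + k) b" for b c
  define M where "M b = (\<Sum>r\<in>{1..k-1}. min (\<Sum>c\<in>{1..r}. w b c) (\<Sum>c\<in>{r+1..k}. w b c))" for b
  have w_nonneg: "w b c \<ge> 0" if "b \<in> {1..d}" "c \<in> {1..k}" for b c
    unfolding w_def using that by (intro add_nonneg_nonneg Pnn) auto
  have "\<forall>b\<in>{1..d}. \<exists>c\<in>{1..k}. (\<Sum>c'\<in>{1..k}. w b c') - w b c \<le> M b"
    unfolding M_def using assms(1) w_nonneg
    by (intro ballI exists_index_total_minus_le_sum_min_prefix_suffix) auto
  then obtain g where g: "\<forall>b\<in>{1..d}. g b \<in> {1..k}"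
    and g_le: "\<forall>b\<in>{1..d}. (\<Sum>c\<in>{1..k}. w b c) - w b (g b) \<le> M b"
    by metis
  have "(\<Sum>b\<in>{1..d}. M b)
      = (\<Sum>r\<in>{1..k-1}. \<Sum>b\<in>{1..d}. min (\<Sum>c\<in>{1..r}. w b c) (\<Sum>c\<in>{r+1..k}. w b c))"
    unfolding M_def by (rule sum.swap)
  also have "\<dots> \<le> (\<Sum>r\<in>{1..k-1}. real k * \<epsilon>)"
  proof (rule sum_mono)
    fix r assume r: "r \<in> {1..k-1}"
    show "(\<Sum>b\<in>{1..d}. min (\<Sum>c\<in>{1..r}. w b c) (\<Sum>c\<in>{r+1..k}. w b c)) \<le> real k * \<epsilon>"
      unfolding w_def by (rule sum_min_prefix_suffix_le[OF assms(1) _ Psum sep[OF r]]) (use r in auto)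
  qed
  finally have M_bound: "(\<Sum>b\<in>{1..d}. M b) \<le> (real k - 1) * (real k * \<epsilon>)"
    using assms(1) by (simp add: of_nat_diff)
  have "decoding_error k d P g
      = (\<Sum>b\<in>{1..d}. (\<Sum>a\<in>{1..2*k}. P a b) - (P (g b) b + P (g b + k) b)) / (2 * real k)"
    using g by (intro decoding_error_eq) blast
  also have "\<dots> = (\<Sum>b\<in>{1..d}. (\<Sum>c\<in>{1..k}. w b c) - w b (g b)) / (2 * real k)"
    unfolding w_def sum_double_interval_pairs ..
  also have "\<dots> \<le> (\<Sum>b\<in>{1..d}. M b) / (2 * real k)"
    using g_le by (intro divide_right_mono sum_mono) auto
  also have "\<dots> \<le> (real k - 1) * (real k * \<epsilon>) / (2 * real k)"
    using M_bound by (intro divide_right_mono) auto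
  also have "\<dots> = (real k - 1) * \<epsilon> / 2"
    using assms(1) by simp
  finally have "decoding_error k d P g \<le> (real k - 1) * \<epsilon> / 2" .
  with g show ?thesis by blast
qed

lemma mutual_info_ge_of_decoding_error:
  fixes \<alpha> \<beta> :: real
  assumes "k \<ge> 1"
    and Pnn: "\<And>a b. a \<in> {1..2*k} \<Longrightarrow> b \<in> {1..d} \<Longrightarrow> P a b \<ge> 0"
    and Psum: "\<And>a. a \<in> {1..2*k} \<Longrightarrow> (\<Sum>b\<in>{1..d}. P a b) = 1"
    and g: "\<And>b. b \<in> {1..d} \<Longrightarrow> g b \<in> {1..k}"
    and \<alpha>_pos: "\<alpha> > 0" and \<beta>_nonneg: "\<beta> \<ge> 0"
    and total: "2 * \<alpha> + (2 * real k - 2) * \<beta> = 1"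
    and \<beta>_zero: "\<beta> = 0 \<Longrightarrow> decoding_error k d P g = 0"
  shows "log 2 (2 * real k) + log 2 \<alpha> + (log 2 \<beta> - log 2 \<alpha>) * decoding_error k d P g
           \<le> mutual_info_AB k d P"
proof -
  define S where "S = {1..2*k}"
  define D where "D = {1..d}"
  define p where "p = joint_AB k P"
  define miss where "miss x = (if pair_class k (fst x) = g (snd x) then 0 else p x)" for x
  define r where "r x = (if pair_class k (fst x) = g (snd x) then \<alpha> else \<beta>)" for x
  have p_nonneg: "x \<in> S \<times> D \<Longrightarrow> p x \<ge> 0" for x
    unfolding p_def S_def D_def using joint_AB_nonneg[of k d P, OF Pnn] by blast
  have p_sum: "sum p (S \<times> D) = 1"
    unfolding p_def S_def D_def using sum_joint_AB[OF assms(1) Psum] .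
  have err: "decoding_error k d P g = sum miss (S \<times> D)"
    unfolding decoding_error_def miss_def p_def S_def D_def ..
  have r_sum: "(\<Sum>a\<in>S. r (a, b)) = 1" if "b \<in> D" for b
  proof -
    have "(\<Sum>a\<in>S. r (a, b)) = (\<Sum>a\<in>S. \<alpha> - (if pair_class k a = g b then 0 else \<alpha> - \<beta>))"
      unfolding r_def by (intro sum.cong) auto
    also have "\<dots> = 2 * \<alpha> + (2 * real k - 2) * \<beta>"
      using sum_pair_class_ne[of "g b" k "\<lambda>_. \<alpha> - \<beta>"] g that
      unfolding S_def D_def by (simp add: sum_subtractf algebra_simps)
    finally show ?thesis using total by simp
  qed
  have r_pos: "r x > 0" if x: "x \<in> S \<times> D" and "p x > 0" for x
  proof (cases "\<beta> = 0 \<and> pair_class k (fst x) \<noteq> g (snd x)")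
    case True
    then have "sum miss (S \<times> D) = 0" using \<beta>_zero err by simp
    moreover have "miss y \<ge> 0" if "y \<in> S \<times> D" for y
      using p_nonneg[OF that] by (simp add: miss_def)
    ultimately have "miss x = 0"
      using sum_nonneg_eq_0_iff[of "S \<times> D" miss] x by (auto simp: S_def D_def)
    then show ?thesis using True \<open>p x > 0\<close> by (simp add: miss_def)
  next
    case False
    then show ?thesis using \<alpha>_pos \<beta>_nonneg by (auto simp: r_def)
  qed
  have "(\<Sum>b\<in>D. law_B k P b * log 2 (law_B k P b)) + (\<Sum>x\<in>S \<times> D. p x * log 2 (r x))
      \<le> (\<Sum>x\<in>S \<times> D. p x * log 2 (p x))"
    unfolding law_B_eq_sum_joint_AB p_def[symmetric] S_def[symmetric]
    using p_nonneg p_sum r_sum r_pos \<alpha>_pos \<beta>_nonneg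
    by (intro conditional_gibbs_inequality) (auto simp: S_def D_def r_def)
  moreover have "(\<Sum>x\<in>S \<times> D. p x * log 2 (r x))
      = log 2 \<alpha> * sum p (S \<times> D) + (log 2 \<beta> - log 2 \<alpha>) * sum miss (S \<times> D)"
  proof -
    have "p x * log 2 (r x) = log 2 \<alpha> * p x + (log 2 \<beta> - log 2 \<alpha>) * miss x" for x
      by (simp add: r_def miss_def algebra_simps)
    then show ?thesis by (simp add: sum.distrib sum_distrib_left)
  qed
  moreover have "mutual_info_AB k d P = log 2 (2 * real k)
      - (\<Sum>b\<in>D. law_B k P b * log 2 (law_B k P b)) + (\<Sum>x\<in>S \<times> D. p x * log 2 (p x))"
    unfolding mutual_info_AB_def shannon_entropy_law_A[OF assms(1)]
    by (simp add: shannon_entropy_def S_def D_def p_def)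
  ultimately show ?thesis using p_sum err by simp
qed

lemma fano_bound_le:
  fixes \<delta> e :: real
  assumes "k \<ge> 2" "0 \<le> e" "e \<le> \<delta>" "\<delta> < 1/2"
  shows "log 2 (real k) - \<delta> * log 2 (real k - 1) - bin_entropy \<delta>
    \<le> log 2 (2 * real k) + log 2 ((1 - \<delta>) / 2)
       + (log 2 (\<delta> / (2 * (real k - 1))) - log 2 ((1 - \<delta>) / 2)) * e"
proof -
  have k: "real k - 1 > 0" using assms(1) by simp
  have log_2k: "log 2 (2 * real k) = 1 + log 2 (real k)" using k by (simp add: log_mult)
  have log_\<alpha>: "log 2 ((1 - \<delta>) / 2) = log 2 (1 - \<delta>) - 1" using assms(4) by (simp add: log_divide)
  show ?thesis
  proof (cases "\<delta> = 0")
    case True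
    then show ?thesis using assms log_2k log_\<alpha> by (simp add: bin_entropy_def)
  next
    case False
    then have \<delta>: "\<delta> > 0" using assms by simp
    have "log 2 (\<delta> / (2 * (real k - 1))) = log 2 \<delta> - log 2 (2 * (real k - 1))"
      using \<delta> k by (intro log_divide_pos) auto
    also have "log 2 (2 * (real k - 1)) = 1 + log 2 (real k - 1)"
      using k by (subst log_mult) auto
    finally have log_\<beta>: "log 2 (\<delta> / (2 * (real k - 1))) = log 2 \<delta> - 1 - log 2 (real k - 1)"
      by simp
    define X where "X = log 2 (1 - \<delta>) - log 2 \<delta> + log 2 (real k - 1)"
    have "log 2 \<delta> \<le> log 2 (1 - \<delta>)" using \<delta> assms(4) by simp
    moreover have "log 2 (real k - 1) \<ge> 0" using assms(1) by simp
    ultimately have "X \<ge> 0" unfolding X_def by simp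
    with assms(3) have "e * X \<le> \<delta> * X" by (rule mult_right_mono)
    have "log 2 (real k) - \<delta> * log 2 (real k - 1) - bin_entropy \<delta>
        = log 2 (real k) + log 2 (1 - \<delta>) - \<delta> * X"
      unfolding bin_entropy_def X_def by (simp add: algebra_simps)
    also have "\<dots> \<le> log 2 (real k) + log 2 (1 - \<delta>) - e * X"
      using \<open>e * X \<le> \<delta> * X\<close> by simp
    also have "\<dots> = log 2 (2 * real k) + log 2 ((1 - \<delta>) / 2)
       + (log 2 (\<delta> / (2 * (real k - 1))) - log 2 ((1 - \<delta>) / 2)) * e"
      unfolding log_2k log_\<alpha> log_\<beta> X_def by (simp add: algebra_simps)
    finally show ?thesis .
  qed
qed

theorem mainTheorem2:
  fixes k d :: nat and \<epsilon> :: real and P :: "nat \<Rightarrow> nat \<Rightarrow> real"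
  assumes hk: "k \<ge> 2" and hd: "d \<ge> 1"
    and heps: "\<epsilon> < 1 / (real k - 1)"
    and Pnn: "\<And>a b. a \<in> {1..2*k} \<Longrightarrow> b \<in> {1..d} \<Longrightarrow> P a b \<ge> 0"
    and Psum: "\<And>a. a \<in> {1..2*k} \<Longrightarrow> (\<Sum>b\<in>{1..d}. P a b) = 1"
    and hsep: "\<And>r. r \<in> {1..k-1} \<Longrightarrow>
        1 / real (2 * k) *
          (\<Sum>b\<in>{1..d}. \<bar>(\<Sum>a\<in>{1..r}. P a b + P (a + k) b)
                         - (\<Sum>a\<in>{r+1..k}. P a b + P (a + k) b)\<bar>) \<ge> 1 - \<epsilon>"
  shows "mutual_info_AB k d P \<ge>
           log 2 (real k) - ((real k - 1) * \<epsilon> / 2) * log 2 (real k - 1)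
           - bin_entropy ((real k - 1) * \<epsilon> / 2)"
proof -
  define \<delta> where "\<delta> = (real k - 1) * \<epsilon> / 2"
  have k: "k \<ge> 1" "real k - 1 > 0" using hk by auto
  obtain g where g: "\<forall>b\<in>{1..d}. g b \<in> {1..k}" and err: "decoding_error k d P g \<le> \<delta>"
    using exists_decoder_with_small_error[OF k(1) Pnn Psum hsep] unfolding \<delta>_def by blast
  have err_nonneg: "decoding_error k d P g \<ge> 0" using Pnn by (rule decoding_error_nonneg)
  have "\<delta> < 1/2"
    using mult_strict_left_mono[OF heps k(2)] k(2) unfolding \<delta>_def by simp
  then have "log 2 (real k) - \<delta> * log 2 (real k - 1) - bin_entropy \<delta>
      \<le> log 2 (2 * real k) + log 2 ((1 - \<delta>) / 2)
         + (log 2 (\<delta> / (2 * (real k - 1))) - log 2 ((1 - \<delta>) / 2)) * decoding_error k d P g"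
    using hk err_nonneg err by (intro fano_bound_le)
  also have "\<dots> \<le> mutual_info_AB k d P"
    using k g err err_nonneg \<open>\<delta> < 1/2\<close>
    by (intro mutual_info_ge_of_decoding_error Pnn Psum) (auto simp: field_simps)
  finally show ?thesis unfolding \<delta>_def .
qed

end
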